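(* The super-differential of $\theta$ at the origin is $\partial^+\theta(0)=\overline{\{\nabla\theta(q^{-1/2},q^{1/2}):q\in(0,\infty)\}}+[0,\infty)^2$.
   Context: $\theta:[0,\infty)^2\to[0,\infty)$ is continuous, concave, 1-homogeneous, symmetric, $C^\infty$ on $(0,\infty)^2$, with $\theta(0,s)=\theta(s,0)=0$, $\theta(s,s)=s$, $\theta(s,t)>0$ for $s,t>0$, and nondecreasing in each argument; it is regarded as a concave function $\mathbb{R}^2\to\mathbb{R}\cup\{-\infty\}$ with $\theta(s,t)=-\infty$ if $\min\{s,t\}<0$. The super-differential is $\partial^+\theta(x)=\{r\in\mathbb{R}^2:\theta(y)\le\theta(x)+\langle r,y-x\rangle\ \forall y\in\mathbb{R}^2\}$ (i.e. $-\partial(-\theta)(x)$). The overline denotes closure in $\mathbb{R}^2$ and $+$ the Minkowski sum. *)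

theory Defs
  imports "HOL-Analysis.Analysis" "HOL-Library.Extended_Real"
begin

definition quadrant :: "(real \<times> real) set" where
  "quadrant = {(s, t). 0 \<le> s \<and> 0 \<le> t}"

definition theta_ext :: "(real \<times> real \<Rightarrow> real) \<Rightarrow> real \<times> real \<Rightarrow> ereal" where
  "theta_ext \<theta> x = (if min (fst x) (snd x) < 0 then -\<infinity> else ereal (\<theta> x))"

definition superdiff :: "(real \<times> real \<Rightarrow> ereal) \<Rightarrow> real \<times> real \<Rightarrow> (real \<times> real) set" where
  "superdiff f x = {r. \<forall>y. f y \<le> f x + ereal (inner r (y - x))}"

inductive iter_partial :: "('a::euclidean_space \<Rightarrow> real) \<Rightarrow> ('a \<Rightarrow> real) \<Rightarrow> bool"
  for f where
  base: "iter_partial f f"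
| step: "iter_partial f g \<Longrightarrow> b \<in> Basis \<Longrightarrow>
           iter_partial f (\<lambda>x. frechet_derivative g (at x) b)"

definition smooth_on :: "('a::euclidean_space \<Rightarrow> real) \<Rightarrow> 'a set \<Rightarrow> bool" where
  "smooth_on f S \<longleftrightarrow> open S \<and> (\<forall>g. iter_partial f g \<longrightarrow> g differentiable_on S)"

definition grad :: "(real \<times> real \<Rightarrow> real) \<Rightarrow> real \<times> real \<Rightarrow> real \<times> real" where
  "grad f x = (frechet_derivative f (at x) (1, 0), frechet_derivative f (at x) (0, 1))"

end

theory Submission
  imports Defs
begin

text \<open>A vector r is a supergradient of the extended \<theta> at the origin iff \<theta> \<le> \<langle>r, -\<rangle> on the
quadrant. By concavity and Euler's identity every gradient g(q) = grad \<theta> (1 / sqrt q, sqrt q)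
is such a linear majorant, and the majorants form a closed set stable under adding the quadrant.
Conversely, testing a majorant r = (a, b) at (1, q) gives g1(q) + q g2(q) \<le> a + q b. If g2
attains b, that gradient lies below r. Otherwise g2 - b has constant sign by continuity, and
letting q \<rightarrow> 0 (if g2 < b) or q \<rightarrow> \<infinity> (if g2 > b) yields gradients arbitrarily close to the
box [0, r], hence a point of the closure of the gradient curve below r.\<close>

lemma concave_on_le_tangent:
  fixes f :: "'a::real_normed_vector \<Rightarrow> real"
  assumes conc: "concave_on S f" and x: "x \<in> S" and y: "y \<in> S"
    and D: "(f has_derivative D) (at x)"
  shows "f y \<le> f x + D (y - x)"
proof -
  define v where "v = y - x"
  have "((\<lambda>t. x + t *\<^sub>R v) has_derivative (\<lambda>t. t *\<^sub>R v)) (at 0)"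
    by (auto intro!: derivative_eq_intros)
  from diff_chain_at[OF this] D
  have "((\<lambda>t. f (x + t *\<^sub>R v)) has_derivative (\<lambda>t. D (t *\<^sub>R v))) (at 0)"
    by (simp add: o_def)
  moreover have "(\<lambda>t. D (t *\<^sub>R v)) = (*) (D v)"
    using linear_scale[OF has_derivative_linear[OF D]] by (simp add: fun_eq_iff mult.commute)
  ultimately have "((\<lambda>t. f (x + t *\<^sub>R v)) has_field_derivative D v) (at 0 within {0<..})"
    by (simp add: has_field_derivative_def has_derivative_at_withinI)
  then have lim: "((\<lambda>t. (f (x + t *\<^sub>R v) - f x) / t) \<longlongrightarrow> D v) (at_right 0)"
    by (simp add: has_field_derivative_iff)
  have "\<forall>\<^sub>F t in at_right 0. t \<in> {0<..<1::real}"
    by (rule eventually_at_right_real) simp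
  then have "\<forall>\<^sub>F t in at_right 0. f y - f x \<le> (f (x + t *\<^sub>R v) - f x) / t"
  proof eventually_elim
    case (elim t)
    have "(1 - t) * f x + t * f y \<le> f ((1 - t) *\<^sub>R x + t *\<^sub>R y)"
      using concave_onD[OF conc, of t x y] elim x y by auto
    also have "(1 - t) *\<^sub>R x + t *\<^sub>R y = x + t *\<^sub>R v"
      by (simp add: v_def algebra_simps)
    finally have "t * (f y - f x) \<le> f (x + t *\<^sub>R v) - f x"
      by (simp add: algebra_simps)
    then show ?case
      using elim by (simp add: pos_le_divide_eq mult.commute)
  qed
  from tendsto_lowerbound[OF lim this] show ?thesis
    by (simp add: v_def)
qed

text \<open>Euler's identity follows from the tangent inequality at the cone points 2x and 0.\<close>
lemma concave_homogeneous_derivative: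
  fixes f :: "'a::real_normed_vector \<Rightarrow> real"
  assumes conc: "concave_on S f" and x: "x \<in> S"
    and hom: "\<And>c z. 0 \<le> c \<Longrightarrow> z \<in> S \<Longrightarrow> c *\<^sub>R z \<in> S \<and> f (c *\<^sub>R z) = c * f z"
    and D: "(f has_derivative D) (at x)"
  shows "D x = f x" and "y \<in> S \<Longrightarrow> f y \<le> D y"
proof -
  have lin: "linear D" using D by (rule has_derivative_linear)
  have tangent: "f y \<le> f x + D y - D x" if "y \<in> S" for y
    using concave_on_le_tangent[OF conc x that D] by (simp add: linear_diff[OF lin])
  have two: "2 *\<^sub>R x \<in> S" "f (2 *\<^sub>R x) = 2 * f x" and zero: "0 \<in> S" "f 0 = 0"
    using hom[OF _ x, of 2] hom[OF _ x, of 0] by auto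
  have "2 * f x \<le> f x + D x"
    using tangent[OF two(1)] two(2) by (simp add: linear_scale[OF lin])
  moreover have "0 \<le> f x - D x"
    using tangent[OF zero(1)] zero(2) by (simp add: linear_0[OF lin])
  ultimately show Euler: "D x = f x" by linarith
  show "f y \<le> D y" if "y \<in> S" using tangent[OF that] Euler by simp
qed

lemma has_derivative_inner_grad:
  assumes "(f has_derivative D) (at x)"
  shows "D y = inner (grad f x) y"
proof -
  have lin: "linear D" and eq: "frechet_derivative f (at x) = D"
    using assms by (auto simp: has_derivative_linear frechet_derivative_at[symmetric])
  obtain a b where y: "y = (a, b)" by (cases y)
  have "D y = a * D (1, 0) + b * D (0, 1)"
    using linear_add[OF lin, of "a *\<^sub>R (1, 0)" "b *\<^sub>R (0, 1)"]
      linear_scale[OF lin, of a "(1, 0)"] linear_scale[OF lin, of b "(0, 1)"]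
    by (simp add: y)
  then show ?thesis by (simp add: grad_def eq y)
qed

lemma closure_meets_cbox:
  fixes G :: "'a::euclidean_space set"
  assumes near: "\<And>e. 0 < e \<Longrightarrow> \<exists>x\<in>G. x \<in> cbox a (b + e *\<^sub>R One)"
  shows "\<exists>l\<in>closure G. l \<in> cbox a b"
proof -
  have widen: "cbox a (b + d *\<^sub>R One) \<subseteq> cbox a (b + e *\<^sub>R One)" if "d \<le> e" for d e :: real
    using that by (fastforce simp: mem_box inner_add_left)
  obtain x where x: "\<And>n. x n \<in> G" "\<And>n. x n \<in> cbox a (b + inverse (Suc n) *\<^sub>R One)"
    using near[of "inverse (Suc _)"] by (metis of_nat_0_less_iff positive_imp_inverse_positive zero_less_Suc)
  have "\<forall>n. x n \<in> cbox a (b + 1 *\<^sub>R One)"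
    using x(2) widen[of "inverse (Suc _)" 1] by (auto simp: inverse_le_1_iff)
  then obtain l r where r: "strict_mono r" and lim: "(x \<circ> r) \<longlonglongrightarrow> l"
    using seq_compactE[OF compact_imp_seq_compact[OF compact_cbox]] by metis
  have "l \<in> closure G"
    unfolding closure_sequential using x(1) lim by (intro exI[of _ "x \<circ> r"]) auto
  moreover have "l \<in> cbox a (b + e *\<^sub>R One)" if "0 < e" for e
  proof (rule Lim_in_closed_set[OF closed_cbox _ _ lim])
    obtain N where N: "inverse (Suc N) < e"
      using reals_Archimedean \<open>0 < e\<close> by blast
    have "x (r n) \<in> cbox a (b + e *\<^sub>R One)" if "N \<le> n" for n
    proof -
      have "inverse (real (Suc (r n))) \<le> inverse (Suc N)"
        using seq_suble[OF r, of n] that by (simp add: le_imp_inverse_le)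
      then show ?thesis using x(2) widen N by (meson less_imp_le order_trans subsetD)
    qed
    then show "\<forall>\<^sub>F n in sequentially. (x \<circ> r) n \<in> cbox a (b + e *\<^sub>R One)"
      by (auto simp: eventually_sequentially)
  qed simp
  then have "l \<in> cbox a b"
    by (auto simp: mem_box inner_add_left intro: field_le_epsilon)
  ultimately show ?thesis by blast
qed

lemma continuous_on_connected_avoids:
  fixes f :: "'a::topological_space \<Rightarrow> 'b::linorder_topology"
  assumes "continuous_on S f" "connected S" "\<And>x. x \<in> S \<Longrightarrow> f x \<noteq> c"
  shows "(\<forall>x\<in>S. f x < c) \<or> (\<forall>x\<in>S. c < f x)"
proof (rule ccontr)
  assume "\<not> ?thesis"
  then obtain x y where "x \<in> S" "y \<in> S" "f x \<le> c" "c \<le> f y"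
    by (auto simp: not_less)
  then have "c \<in> f ` S"
    using connectedD_interval[OF connected_continuous_image[OF assms(1,2)]] by blast
  then show False using assms(3) by blast
qed

lemma curve_meets_cbox_if_approx:
  fixes g :: "real \<Rightarrow> real \<times> real"
  assumes nonneg: "\<And>q. 0 < q \<Longrightarrow> g q \<in> quadrant"
    and approx: "\<And>e. 0 < e \<Longrightarrow> \<exists>q>0. fst (g q) \<le> a + e \<and> snd (g q) \<le> b + e"
  shows "\<exists>l\<in>closure (g ` {0<..}). l \<in> cbox 0 (a, b)"
proof (rule closure_meets_cbox)
  fix e :: real assume "0 < e"
  then obtain q where q: "0 < q" "fst (g q) \<le> a + e" "snd (g q) \<le> b + e"
    using approx by blast
  then have "g q \<in> cbox 0 (a + e, b + e)"
    using nonneg[OF q(1)] by (cases "g q") (auto simp: quadrant_def zero_prod_def)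
  then show "\<exists>x\<in>g ` {0<..}. x \<in> cbox 0 ((a, b) + e *\<^sub>R One)"
    using q(1) by (auto simp: Basis_prod_def)
qed

lemma curve_meets_cbox:
  fixes g :: "real \<Rightarrow> real \<times> real"
  assumes cont: "continuous_on {0<..} (snd \<circ> g)"
    and nonneg: "\<And>q. 0 < q \<Longrightarrow> g q \<in> quadrant"
    and below: "\<And>q. 0 < q \<Longrightarrow> fst (g q) + q * snd (g q) \<le> a + q * b"
    and "0 \<le> a" "0 \<le> b"
  shows "\<exists>l\<in>closure (g ` {0<..}). l \<in> cbox 0 (a, b)"
proof -
  have nonneg': "0 \<le> fst (g q)" "0 \<le> snd (g q)" if "0 < q" for q
    using nonneg[OF that] by (auto simp: quadrant_def split: prod.splits)
  show ?thesis
  proof (cases "\<exists>q>0. snd (g q) = b")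
    case True
    then obtain q where q: "0 < q" "snd (g q) = b" by blast
    then have "g q \<in> cbox 0 (a, b)"
      using below[OF q(1)] nonneg'[OF q(1)] by (cases "g q") (simp add: zero_prod_def)
    then show ?thesis
      using q(1) by (auto intro!: bexI[of _ "g q"] closure_subset[THEN subsetD])
  next
    case False
    with continuous_on_connected_avoids[OF cont, of b]
    consider "\<forall>q>0. snd (g q) < b" | "\<forall>q>0. b < snd (g q)"
      by fastforce
    then show ?thesis
    proof cases
      case under: 1
      show ?thesis
      proof (rule curve_meets_cbox_if_approx[OF nonneg])
        fix e :: real assume "0 < e"
        define q where "q = e / (b + 1)"
        have "0 < q" "q * b \<le> e"
          using \<open>0 < e\<close> \<open>0 \<le> b\<close> by (auto simp: q_def field_simps)
        moreover have "0 \<le> q * snd (g q)"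
          using nonneg'[of q] \<open>0 < q\<close> by simp
        ultimately show "\<exists>q>0. fst (g q) \<le> a + e \<and> snd (g q) \<le> b + e"
          using below[of q] under \<open>0 < e\<close> by (intro exI[of _ q]) (auto intro: less_imp_le)
      qed
    next
      case over: 2
      show ?thesis
      proof (rule curve_meets_cbox_if_approx[OF nonneg])
        fix e :: real assume "0 < e"
        define q where "q = (a + 1) / e"
        have "0 < q" "a \<le> q * e"
          using \<open>0 < e\<close> \<open>0 \<le> a\<close> by (auto simp: q_def field_simps)
        moreover have "q * b \<le> q * snd (g q)"
          using over \<open>0 < q\<close> by (simp add: less_imp_le)
        ultimately have "fst (g q) \<le> a" "q * snd (g q) \<le> q * (b + e)"
          using below[of q] nonneg'[of q] unfolding distrib_left by linarith+
        then show "\<exists>q>0. fst (g q) \<le> a + e \<and> snd (g q) \<le> b + e"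
          using \<open>0 < q\<close> \<open>0 < e\<close> by (intro exI[of _ q]) auto
      qed
    qed
  qed
qed

definition linear_majorants :: "(real \<times> real \<Rightarrow> real) \<Rightarrow> (real \<times> real) set" where
  "linear_majorants \<theta> = {r. \<forall>y\<in>quadrant. \<theta> y \<le> inner r y}"

lemma linear_majorantsD: "r \<in> linear_majorants \<theta> \<Longrightarrow> y \<in> quadrant \<Longrightarrow> \<theta> y \<le> inner r y"
  by (simp add: linear_majorants_def)

lemma superdiff_theta_ext_zero:
  assumes "\<theta> 0 = 0"
  shows "superdiff (theta_ext \<theta>) 0 = linear_majorants \<theta>"
proof (intro set_eqI iffI)
  fix r assume r: "r \<in> superdiff (theta_ext \<theta>) 0"
  show "r \<in> linear_majorants \<theta>" unfolding linear_majorants_def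
  proof (intro CollectI ballI)
    fix y assume "y \<in> quadrant"
    moreover have "theta_ext \<theta> y \<le> theta_ext \<theta> 0 + ereal (inner r (y - 0))"
      using r unfolding superdiff_def by blast
    ultimately show "\<theta> y \<le> inner r y"
      using assms by (auto simp: theta_ext_def quadrant_def min_less_iff_disj)
  qed
next
  fix r assume "r \<in> linear_majorants \<theta>"
  then have "\<theta> y \<le> inner r y" if "min (fst y) (snd y) \<ge> 0" for y
    using that by (intro linear_majorantsD) (auto simp: quadrant_def mem_Times_iff)
  then show "r \<in> superdiff (theta_ext \<theta>) 0"
    using assms by (auto simp: superdiff_def theta_ext_def not_less)
qed

lemma closed_linear_majorants: "closed (linear_majorants \<theta>)"
proof -
  have "linear_majorants \<theta> = (\<Inter>y\<in>quadrant. {r. inner y r \<ge> \<theta> y})"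
    by (rule set_eqI) (simp only: linear_majorants_def INT_iff mem_Collect_eq inner_commute)
  then show ?thesis by (simp add: closed_INT closed_halfspace_ge)
qed

lemma linear_majorants_add_quadrant:
  assumes "r \<in> linear_majorants \<theta>" "b \<in> quadrant"
  shows "r + b \<in> linear_majorants \<theta>"
proof -
  have "0 \<le> inner b y" if "y \<in> quadrant" for y
    using assms(2) that by (cases b, cases y) (simp add: quadrant_def)
  then show ?thesis
    using assms(1) by (fastforce simp: linear_majorants_def inner_add_left)
qed

lemma linear_majorants_nonneg:
  assumes "\<theta> (1, 0) = 0" "\<theta> (0, 1) = 0" "(a, b) \<in> linear_majorants \<theta>"
  shows "0 \<le> a" "0 \<le> b"
proof -
  have "\<theta> (1, 0) \<le> inner (a, b) (1, 0)" "\<theta> (0, 1) \<le> inner (a, b) (0, 1)"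
    using linear_majorantsD[OF assms(3), of "(1, 0)"] linear_majorantsD[OF assms(3), of "(0, 1)"]
    by (simp_all add: quadrant_def)
  then show "0 \<le> a" "0 \<le> b" using assms(1,2) by simp_all
qed

lemma linear_majorants_eq_curve_closure_plus_quadrant:
  fixes g :: "real \<Rightarrow> real \<times> real"
  assumes axes: "\<theta> (1, 0) = 0" "\<theta> (0, 1) = 0"
    and cont: "continuous_on {0<..} (snd \<circ> g)"
    and maj: "\<And>q. 0 < q \<Longrightarrow> g q \<in> linear_majorants \<theta>"
    and touch: "\<And>q. 0 < q \<Longrightarrow> fst (g q) + q * snd (g q) = \<theta> (1, q)"
  shows "linear_majorants \<theta> = {l + b | l b. l \<in> closure (g ` {0<..}) \<and> b \<in> quadrant}"
proof (intro set_eqI iffI)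
  fix r assume r: "r \<in> linear_majorants \<theta>"
  obtain a b where ab: "r = (a, b)" by (cases r)
  have "\<exists>l\<in>closure (g ` {0<..}). l \<in> cbox 0 (a, b)"
  proof (rule curve_meets_cbox[OF cont])
    fix q :: real assume "0 < q"
    then have "(1, q) \<in> quadrant" by (simp add: quadrant_def)
    then show "fst (g q) + q * snd (g q) \<le> a + q * b"
      using linear_majorantsD[OF r, of "(1, q)"] touch[OF \<open>0 < q\<close>] by (simp add: ab mult.commute)
    show "g q \<in> quadrant"
      using linear_majorants_nonneg[OF axes] maj[OF \<open>0 < q\<close>]
      by (cases "g q") (simp add: quadrant_def)
  qed (use linear_majorants_nonneg[OF axes] r ab in auto)
  then obtain l where "l \<in> closure (g ` {0<..})" "l \<in> cbox 0 (a, b)" by blast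
  moreover have "r = l + (r - l)" by simp
  moreover have "r - l \<in> quadrant"
    using \<open>l \<in> cbox 0 (a, b)\<close> by (cases l) (simp add: ab quadrant_def zero_prod_def)
  ultimately show "r \<in> {l + b | l b. l \<in> closure (g ` {0<..}) \<and> b \<in> quadrant}" by blast
next
  fix r assume "r \<in> {l + b | l b. l \<in> closure (g ` {0<..}) \<and> b \<in> quadrant}"
  moreover have "closure (g ` {0<..}) \<subseteq> linear_majorants \<theta>"
    using maj by (intro closure_minimal closed_linear_majorants) auto
  ultimately show "r \<in> linear_majorants \<theta>"
    using linear_majorants_add_quadrant by blast
qed

lemma grad_linear_majorant:
  fixes \<theta> :: "real \<times> real \<Rightarrow> real"
  assumes conc: "concave_on quadrant \<theta>"
    and hom: "\<And>c x. 0 \<le> c \<Longrightarrow> x \<in> quadrant \<Longrightarrow> \<theta> (c *\<^sub>R x) = c * \<theta> x"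
    and x: "x \<in> quadrant" and diff: "\<theta> differentiable (at x)"
  shows "grad \<theta> x \<in> linear_majorants \<theta>" and "inner (grad \<theta> x) x = \<theta> x"
proof -
  have D: "(\<theta> has_derivative frechet_derivative \<theta> (at x)) (at x)"
    using diff frechet_derivative_works by blast
  have cone: "c *\<^sub>R z \<in> quadrant \<and> \<theta> (c *\<^sub>R z) = c * \<theta> z" if "0 \<le> c" "z \<in> quadrant" for c z
    using hom[OF that] that by (auto simp: quadrant_def mem_Times_iff)
  note Euler = concave_homogeneous_derivative[OF conc x cone D]
  show "grad \<theta> x \<in> linear_majorants \<theta>" "inner (grad \<theta> x) x = \<theta> x"
    using Euler has_derivative_inner_grad[OF D] by (auto simp: linear_majorants_def)
qed

lemma smooth_on_differentiable_at:
  assumes "smooth_on f S" "x \<in> S"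
  shows "f differentiable (at x)"
  using assms iter_partial.base[of f]
  by (auto simp: smooth_on_def differentiable_on_eq_differentiable_at)

lemma smooth_on_continuous_partial:
  assumes "smooth_on f S" "b \<in> Basis"
  shows "continuous_on S (\<lambda>x. frechet_derivative f (at x) b)"
  using assms iter_partial.step[OF iter_partial.base, of b f]
  by (auto simp: smooth_on_def intro: differentiable_imp_continuous_on)

lemma continuous_on_snd_grad_curve:
  assumes "smooth_on \<theta> {(s, t). 0 < s \<and> 0 < t}"
  shows "continuous_on {0<..} (\<lambda>q. snd (grad \<theta> (1 / sqrt q, sqrt q)))"
proof -
  have "(0, 1) \<in> (Basis :: (real \<times> real) set)" by (simp add: Basis_prod_def)
  from smooth_on_continuous_partial[OF assms this]
  have "continuous_on ((\<lambda>q. (1 / sqrt q, sqrt q)) ` {0<..}) (\<lambda>x. frechet_derivative \<theta> (at x) (0, 1))"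
    by (rule continuous_on_subset) auto
  moreover have "continuous_on {0<..} (\<lambda>q::real. (1 / sqrt q, sqrt q))"
    by (intro continuous_intros) auto
  ultimately show ?thesis
    using continuous_on_compose by (fastforce simp: o_def grad_def)
qed

theorem lemma4p6:
  fixes \<theta> :: "real \<times> real \<Rightarrow> real"
  assumes cont: "continuous_on quadrant \<theta>"
    and conc: "concave_on quadrant \<theta>"
    and hom: "\<And>c x. 0 \<le> c \<Longrightarrow> x \<in> quadrant \<Longrightarrow> \<theta> (c *\<^sub>R x) = c * \<theta> x"
    and sym: "\<And>s t. 0 \<le> s \<Longrightarrow> 0 \<le> t \<Longrightarrow> \<theta> (s, t) = \<theta> (t, s)"
    and smooth: "smooth_on \<theta> {(s, t). 0 < s \<and> 0 < t}"
    and zero1: "\<And>s. 0 \<le> s \<Longrightarrow> \<theta> (0, s) = 0"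
    and zero2: "\<And>s. 0 \<le> s \<Longrightarrow> \<theta> (s, 0) = 0"
    and diag: "\<And>s. 0 \<le> s \<Longrightarrow> \<theta> (s, s) = s"
    and pos: "\<And>s t. 0 < s \<Longrightarrow> 0 < t \<Longrightarrow> \<theta> (s, t) > 0"
    and mono1: "\<And>s s' t. 0 \<le> s \<Longrightarrow> s \<le> s' \<Longrightarrow> 0 \<le> t \<Longrightarrow> \<theta> (s, t) \<le> \<theta> (s', t)"
    and mono2: "\<And>s t t'. 0 \<le> s \<Longrightarrow> 0 \<le> t \<Longrightarrow> t \<le> t' \<Longrightarrow> \<theta> (s, t) \<le> \<theta> (s, t')"
  shows "superdiff (theta_ext \<theta>) 0 =
    {a + b | a b. a \<in> closure {grad \<theta> (1 / sqrt q, sqrt q) | q. 0 < q} \<and> b \<in> quadrant}"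
proof -
  define p where "p q = (1 / sqrt q, sqrt q)" for q :: real
  have p: "p q \<in> {(s, t). 0 < s \<and> 0 < t}" "p q \<in> quadrant" if "0 < q" for q
    using that by (simp_all add: p_def quadrant_def)
  have maj: "grad \<theta> (p q) \<in> linear_majorants \<theta>"
    and Euler: "inner (grad \<theta> (p q)) (p q) = \<theta> (p q)" if "0 < q" for q
    using grad_linear_majorant[OF conc hom p(2) smooth_on_differentiable_at[OF smooth p(1)]] that
    by auto
  have touch: "fst (grad \<theta> (p q)) + q * snd (grad \<theta> (p q)) = \<theta> (1, q)" if "0 < q" for q
  proof -
    have scale: "(1, q) = sqrt q *\<^sub>R p q" using that by (simp add: p_def)
    have "fst (grad \<theta> (p q)) + q * snd (grad \<theta> (p q)) = inner (grad \<theta> (p q)) (1, q)"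
      by (simp add: inner_prod_def mult.commute)
    also have "\<dots> = sqrt q * \<theta> (p q)" using Euler[OF that] by (simp add: scale)
    also have "\<dots> = \<theta> (1, q)" using hom[OF _ p(2)[OF that], of "sqrt q"] that by (simp add: scale)
    finally show ?thesis .
  qed
  have "continuous_on {0<..} (snd \<circ> (grad \<theta> \<circ> p))"
    using continuous_on_snd_grad_curve[OF smooth] by (simp add: o_def p_def)
  from linear_majorants_eq_curve_closure_plus_quadrant[OF _ _ this] maj touch
  have "linear_majorants \<theta> = {l + b | l b. l \<in> closure ((grad \<theta> \<circ> p) ` {0<..}) \<and> b \<in> quadrant}"
    using zero1[of 1] zero2[of 1] by simp
  moreover have "(grad \<theta> \<circ> p) ` {0<..} = {grad \<theta> (1 / sqrt q, sqrt q) | q. 0 < q}"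
    by (auto simp: p_def)
  ultimately show ?thesis
    using superdiff_theta_ext_zero zero1[of 0] by (simp add: zero_prod_def)
qed

end
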